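(* Let $G=\langle V,E_s\rangle$ be an undirected graph with $V=\{1,\dots,n\}$, where edges are treated as bidirected (so $(i,j)\in E_s$ iff $(j,i)\in E_s$, no loops). Let $\mu_{ij}=\mu_{ji}\ge 0$ ($i\neq j$) be requirements, and let $\delta=(\delta_1,\dots,\delta_n)$ be a sequence of positive integers with $\sum_i\delta_i=2(n-1)$ such that $G$ has at least one spanning tree in which every vertex $i$ has degree $\delta_i$ (an admissible tree). Let $m=|\{i:\delta_i>1\}|$, $L=m+2$, and let $M\ge L$ be a constant. For a spanning tree $T$ let $C_A(T)=\sum_{i\neq j}\mu_{ij}d_T(i,j)$, where $d_T(i,j)$ is the number of edges of the path from $i$ to $j$ in $T$; an admissible tree minimizing $C_A$ is called optimal. Consider the mixed-integer linear program (F1L) in variables $x_{ij}=x_{ji}\in\{0,1\}$ for $(i,j)\in E_s$, integer variables $d_{ij}=d_{ji}\in\{1,\dots,L\}$ for $i\neq j\in V$, and $y_{ikj}\in\{0,1\}$ for $i<j$, $(i,k)\in E_s$, $k\neq j$: minimize $\sum_{i,j=1,\,i\neq j}^n\mu_{ij}d_{ij}$ subject to - $d_{ij}\ge d_{kj}+1-M(1-y_{ikj})$ for all $i<j$ and $(i,k)\in E_s$ with $k\neq j$; - $\sum_{k\neq j:(i,k)\in E_s}y_{ikj}=1-x_{ij}$ for all $(i,j)\in E_s$, $i<j$; - $\sum_{k\neq j:(i,k)\in E_s}y_{ikj}=1$ for all $i<j$ with $(i,j)\notin E_s$; - $y_{ikj}\le x_{ik}$ for all $i<j$, $(i,k)\in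 E_s$, $k\neq j$; - $\sum_{j:(i,j)\in E_s}x_{ij}=\delta_i$ for all $i\in V$. Let $(x^*,y^*,d^* )$ be an optimal solution of F1L. Then the edges $\{(i,j)\in E_s:x^*_{ij}=1\}$ form an optimal tree, and the optimal objective value equals its communication cost $C_A$.
   Context: Variable $y_{ikj}$ is intended to equal 1 iff the shortest path from $i$ to $j$ in the tree goes through the neighbour $k$ of $i$; $d_{ij}$ is intended to be the tree distance between $i$ and $j$. *)

theory Defs
  imports Complex_Main
begin

(* Graphs: vertex set V = {1..n}; undirected edges stored as a symmetric set of
   ordered pairs (bidirected), no loops. *)

definition walk :: "(nat \<times> nat) set \<Rightarrow> nat list \<Rightarrow> bool" where
  "walk T vs \<longleftrightarrow> vs \<noteq> [] \<and> (\<forall>i. Suc i < length vs \<longrightarrow> (vs ! i, vs ! Suc i) \<in> T)"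

definition connected_on :: "nat set \<Rightarrow> (nat \<times> nat) set \<Rightarrow> bool" where
  "connected_on V T \<longleftrightarrow>
     (\<forall>i\<in>V. \<forall>j\<in>V. \<exists>vs. walk T vs \<and> hd vs = i \<and> last vs = j)"

definition is_cycle :: "(nat \<times> nat) set \<Rightarrow> nat list \<Rightarrow> bool" where
  "is_cycle T vs \<longleftrightarrow> length vs \<ge> 3 \<and> distinct vs \<and> walk T vs \<and> (last vs, hd vs) \<in> T"

definition acyclic_graph :: "(nat \<times> nat) set \<Rightarrow> bool" where
  "acyclic_graph T \<longleftrightarrow> (\<nexists>vs. is_cycle T vs)"

definition spanning_tree :: "nat set \<Rightarrow> (nat \<times> nat) set \<Rightarrow> (nat \<times> nat) set \<Rightarrow> bool" where
  "spanning_tree V E T \<longleftrightarrow> T \<subseteq> E \<and> sym T \<and> connected_on V T \<and> acyclic_graph T"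

definition deg :: "(nat \<times> nat) set \<Rightarrow> nat \<Rightarrow> nat" where
  "deg T i = card {j. (i, j) \<in> T}"

definition tdist :: "(nat \<times> nat) set \<Rightarrow> nat \<Rightarrow> nat \<Rightarrow> nat" where
  "tdist T i j = (LEAST k. \<exists>vs. walk T vs \<and> hd vs = i \<and> last vs = j \<and> length vs = Suc k)"

definition comm_cost :: "nat \<Rightarrow> (nat \<Rightarrow> nat \<Rightarrow> real) \<Rightarrow> (nat \<times> nat) set \<Rightarrow> real" where
  "comm_cost n \<mu> T = (\<Sum>i\<in>{1..n}. \<Sum>j\<in>{1..n} - {i}. \<mu> i j * real (tdist T i j))"

definition admissible_tree ::
  "nat \<Rightarrow> (nat \<times> nat) set \<Rightarrow> (nat \<Rightarrow> nat) \<Rightarrow> (nat \<times> nat) set \<Rightarrow> bool" where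
  "admissible_tree n E \<delta> T \<longleftrightarrow> spanning_tree {1..n} E T \<and> (\<forall>i\<in>{1..n}. deg T i = \<delta> i)"

definition optimal_tree ::
  "nat \<Rightarrow> (nat \<times> nat) set \<Rightarrow> (nat \<Rightarrow> nat \<Rightarrow> real) \<Rightarrow> (nat \<Rightarrow> nat) \<Rightarrow> (nat \<times> nat) set \<Rightarrow> bool" where
  "optimal_tree n E \<mu> \<delta> T \<longleftrightarrow> admissible_tree n E \<delta> T \<and>
     (\<forall>T'. admissible_tree n E \<delta> T' \<longrightarrow> comm_cost n \<mu> T \<le> comm_cost n \<mu> T')"

(* The MILP F1L.  x i j, d i j, y i k j are integer-valued variables; only the
   indices listed in the formulation are constrained. L = m + 2. *)
definition F1L_feasible ::
  "nat \<Rightarrow> (nat \<times> nat) set \<Rightarrow> (nat \<Rightarrow> nat) \<Rightarrow> nat \<Rightarrow> real \<Rightarrow>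
   (nat \<Rightarrow> nat \<Rightarrow> int) \<Rightarrow> (nat \<Rightarrow> nat \<Rightarrow> nat \<Rightarrow> int) \<Rightarrow> (nat \<Rightarrow> nat \<Rightarrow> int) \<Rightarrow> bool" where
  "F1L_feasible n E \<delta> L M x y d \<longleftrightarrow>
     \<comment> \<open>domains\<close>
     (\<forall>(i,j)\<in>E. x i j = x j i \<and> x i j \<in> {0,1}) \<and>
     (\<forall>i\<in>{1..n}. \<forall>j\<in>{1..n}. i \<noteq> j \<longrightarrow> d i j = d j i \<and> 1 \<le> d i j \<and> d i j \<le> int L) \<and>
     (\<forall>i\<in>{1..n}. \<forall>j\<in>{1..n}. \<forall>k. i < j \<and> (i,k) \<in> E \<and> k \<noteq> j \<longrightarrow> y i k j \<in> {0,1}) \<and>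
     \<comment> \<open>distance constraints\<close>
     (\<forall>i\<in>{1..n}. \<forall>j\<in>{1..n}. \<forall>k. i < j \<and> (i,k) \<in> E \<and> k \<noteq> j \<longrightarrow>
        real_of_int (d i j) \<ge> real_of_int (d k j) + 1 - M * (1 - real_of_int (y i k j))) \<and>
     \<comment> \<open>next-hop constraints\<close>
     (\<forall>(i,j)\<in>E. i < j \<longrightarrow> (\<Sum>k\<in>{k\<in>{1..n}. (i,k) \<in> E \<and> k \<noteq> j}. y i k j) = 1 - x i j) \<and>
     (\<forall>i\<in>{1..n}. \<forall>j\<in>{1..n}. i < j \<and> (i,j) \<notin> E \<longrightarrow>
        (\<Sum>k\<in>{k\<in>{1..n}. (i,k) \<in> E \<and> k \<noteq> j}. y i k j) = 1) \<and>
     (\<forall>i\<in>{1..n}. \<forall>j\<in>{1..n}. \<forall>k. i < j \<and> (i,k) \<in> E \<and> k \<noteq> j \<longrightarrow> y i k j \<le> x i k) \<and>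
     \<comment> \<open>degree constraints\<close>
     (\<forall>i\<in>{1..n}. (\<Sum>j\<in>{j\<in>{1..n}. (i,j) \<in> E}. x i j) = int (\<delta> i))"

definition F1L_obj :: "nat \<Rightarrow> (nat \<Rightarrow> nat \<Rightarrow> real) \<Rightarrow> (nat \<Rightarrow> nat \<Rightarrow> int) \<Rightarrow> real" where
  "F1L_obj n \<mu> d = (\<Sum>i\<in>{1..n}. \<Sum>j\<in>{1..n} - {i}. \<mu> i j * real_of_int (d i j))"

definition F1L_optimal ::
  "nat \<Rightarrow> (nat \<times> nat) set \<Rightarrow> (nat \<Rightarrow> nat \<Rightarrow> real) \<Rightarrow> (nat \<Rightarrow> nat) \<Rightarrow> nat \<Rightarrow> real \<Rightarrow>
   (nat \<Rightarrow> nat \<Rightarrow> int) \<Rightarrow> (nat \<Rightarrow> nat \<Rightarrow> nat \<Rightarrow> int) \<Rightarrow> (nat \<Rightarrow> nat \<Rightarrow> int) \<Rightarrow> bool" where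
  "F1L_optimal n E \<mu> \<delta> L M x y d \<longleftrightarrow> F1L_feasible n E \<delta> L M x y d \<and>
     (\<forall>x' y' d'. F1L_feasible n E \<delta> L M x' y' d' \<longrightarrow> F1L_obj n \<mu> d \<le> F1L_obj n \<mu> d')"

end

theory Submission
  imports Defs
begin

text \<open>The edges \<open>T = {x = 1}\<close> selected by a feasible solution form an admissible tree whose
  distances are bounded by \<open>d\<close>. For \<open>i < j\<close> the next-hop constraints pick a
  \<open>T\<close>-neighbour \<open>k\<close> of \<open>i\<close> with \<open>d k j < d i j\<close>, so by induction on \<open>d\<close> every pair is
  joined in \<open>T\<close> by a walk of length at most \<open>d i j\<close>: \<open>T\<close> is connected and
  \<open>C_A(T) \<le> F1L_obj d\<close>. The degree constraints give \<open>T\<close> exactly \<open>n - 1\<close> edges, so \<open>T\<close> is a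
  spanning tree with degrees \<open>\<delta>\<close>. Conversely every admissible tree, with its distances
  and shortest-path next hops, is feasible, because \<open>L - 1 = m + 1\<close> bounds the length of
  its paths (inner vertices of a path have degree at least 2); hence
  \<open>F1L_obj d \<le> C_A(T')\<close> for every admissible \<open>T'\<close>.\<close>

section \<open>Walks and tree distance\<close>

lemma walk_Nil [simp]: "\<not> walk T []"
  and walk_single [simp]: "walk T [a]"
  by (simp_all add: walk_def)

lemma walk_Cons_Cons [simp]:
  "walk T (a # b # vs) \<longleftrightarrow> (a, b) \<in> T \<and> walk T (b # vs)"
  by (auto simp: walk_def less_Suc_eq_0_disj)

lemma walk_nth_edge: "walk T vs \<Longrightarrow> Suc q < length vs \<Longrightarrow> (vs ! q, vs ! Suc q) \<in> T"
  by (simp add: walk_def)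

lemma walk_append: "walk T (xs @ a # ys) \<longleftrightarrow> walk T (xs @ [a]) \<and> walk T (a # ys)"
  by (induction xs rule: induct_list012) auto

lemma walk_rev: "sym T \<Longrightarrow> walk T vs \<Longrightarrow> walk T (rev vs)"
proof (induction vs rule: induct_list012)
  case (3 a b vs)
  then have "walk T (rev vs @ [b, a])"
    using walk_append[of T "rev vs" b "[a]"] by (auto dest: symD)
  then show ?case by simp
qed auto

definition reachable :: "(nat \<times> nat) set \<Rightarrow> nat \<Rightarrow> nat \<Rightarrow> bool" where
  "reachable T i j \<longleftrightarrow> (\<exists>vs. walk T vs \<and> hd vs = i \<and> last vs = j)"

lemma connected_on_iff_reachable: "connected_on V T \<longleftrightarrow> (\<forall>i\<in>V. \<forall>j\<in>V. reachable T i j)"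
  by (simp add: connected_on_def reachable_def)

lemma reachable_refl: "reachable T i i"
  unfolding reachable_def by (intro exI[of _ "[i]"]) simp

lemma reachable_Cons:
  assumes "(i, k) \<in> T" "reachable T k j"
  shows "reachable T i j"
proof -
  obtain vs where vs: "walk T vs" "hd vs = k" "last vs = j"
    using assms(2) unfolding reachable_def by blast
  then have "walk T (i # vs)" using assms(1) by (cases vs) auto
  then show ?thesis using vs unfolding reachable_def by (intro exI[of _ "i # vs"]) auto
qed

lemma reachable_sym: "sym T \<Longrightarrow> reachable T i j \<Longrightarrow> reachable T j i"
  unfolding reachable_def by (metis walk_rev hd_rev last_rev)

lemma tdist_le: "walk T vs \<Longrightarrow> hd vs = i \<Longrightarrow> last vs = j \<Longrightarrow> tdist T i j \<le> length vs - 1"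
  unfolding tdist_def by (rule Least_le) (cases vs; auto)

lemma tdist_self [simp]: "tdist T i i = 0"
  using tdist_le[of T "[i]" i i] by simp

lemma shortest_walk:
  assumes "reachable T i j"
  obtains vs where "walk T vs" "hd vs = i" "last vs = j" "length vs = Suc (tdist T i j)"
proof -
  obtain vs where "walk T vs" "hd vs = i" "last vs = j"
    using assms unfolding reachable_def by blast
  then have "\<exists>k vs. walk T vs \<and> hd vs = i \<and> last vs = j \<and> length vs = Suc k"
    by (intro exI[of _ "length vs - 1"] exI[of _ vs]) (cases vs; auto)
  from LeastI_ex[OF this] show ?thesis
    using that unfolding tdist_def by blast
qed

lemma tdist_pos:
  assumes "reachable T i j" "i \<noteq> j"
  shows "0 < tdist T i j"
proof (rule ccontr)
  assume "\<not> 0 < tdist T i j"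
  then obtain vs where "hd vs = i" "last vs = j" "length vs = 1"
    using shortest_walk[OF assms(1)] by auto
  then show False using assms(2) by (cases vs) auto
qed

lemma tdist_sym:
  assumes "sym T"
  shows "tdist T i j = tdist T j i"
proof -
  have reverse: "\<exists>ws. walk T ws \<and> hd ws = j \<and> last ws = i \<and> length ws = l"
    if "walk T vs" "hd vs = i" "last vs = j" "length vs = l" for vs i j l
    using that by (intro exI[of _ "rev vs"]) (auto simp: walk_rev[OF assms] hd_rev last_rev)
  show ?thesis
    unfolding tdist_def by (rule arg_cong[where f = Least], intro ext iffI) (blast dest: reverse)+
qed

lemma tdist_Cons_le:
  assumes "(i, k) \<in> T" "reachable T k j"
  shows "tdist T i j \<le> Suc (tdist T k j)"
proof -
  obtain vs where vs: "walk T vs" "hd vs = k" "last vs = j" "length vs = Suc (tdist T k j)"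
    using shortest_walk[OF assms(2)] by blast
  then have "walk T (i # vs)" "last (i # vs) = j" using assms(1) by (cases vs; auto)+
  from tdist_le[OF this(1) _ this(2)] show ?thesis using vs by simp
qed

lemma shortest_walk_distinct:
  assumes "walk T vs" "hd vs = i" "last vs = j" "length vs = Suc (tdist T i j)"
  shows "distinct vs"
proof (rule ccontr)
  assume "\<not> distinct vs"
  then obtain xs a ys zs where vs: "vs = xs @ [a] @ ys @ [a] @ zs"
    using not_distinct_decomp by blast
  have "walk T (xs @ [a])" "walk T (a # zs)"
    using assms(1) walk_append[of T xs a "ys @ a # zs"] walk_append[of T "a # ys" a zs]
    unfolding vs by auto
  then have "walk T (xs @ a # zs)" using walk_append by blast
  moreover have "hd (xs @ a # zs) = i" using assms(2) unfolding vs by (cases xs) auto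
  moreover have "last (xs @ a # zs) = j" using assms(3) unfolding vs by (cases zs) auto
  ultimately have "tdist T i j \<le> length (xs @ a # zs) - 1" by (rule tdist_le)
  then show False using assms(4) unfolding vs by simp
qed

lemma ex_neighbour_tdist_Suc:
  assumes "reachable T i j" "i \<noteq> j"
  shows "\<exists>k. (i, k) \<in> T \<and> Suc (tdist T k j) = tdist T i j"
proof -
  obtain ws where ws: "walk T ws" "hd ws = i" "last ws = j" "length ws = Suc (tdist T i j)"
    using shortest_walk[OF assms(1)] by blast
  then obtain k rest where ws_eq: "ws = i # k # rest"
    using tdist_pos[OF assms] by (cases ws rule: remdups_adj.cases) auto
  then have ik: "(i, k) \<in> T" and "walk T (k # rest)" using ws(1) by auto
  moreover have "last (k # rest) = j" using ws(3) unfolding ws_eq by simp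
  ultimately have "tdist T k j \<le> length rest" and reach: "reachable T k j"
    using tdist_le[of T "k # rest" k j] unfolding reachable_def by auto
  then have "Suc (tdist T k j) = tdist T i j"
    using tdist_Cons_le[OF ik reach] ws(4) unfolding ws_eq by simp
  with ik show ?thesis by blast
qed

definition next_hop :: "(nat \<times> nat) set \<Rightarrow> nat \<Rightarrow> nat \<Rightarrow> nat" where
  "next_hop T i j = (SOME k. (i, k) \<in> T \<and> Suc (tdist T k j) = tdist T i j)"

lemma
  assumes "reachable T i j" "i \<noteq> j"
  shows next_hop_edge: "(i, next_hop T i j) \<in> T"
    and tdist_next_hop: "Suc (tdist T (next_hop T i j) j) = tdist T i j"
  using someI_ex[OF ex_neighbour_tdist_Suc[OF assms]] unfolding next_hop_def by auto

section \<open>Spanning trees by edge count\<close>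

lemma card_eq_sum_deg:
  assumes "finite V" "T \<subseteq> V \<times> V"
  shows "card T = (\<Sum>v\<in>V. deg T v)"
proof -
  have "T = (SIGMA v:V. {w. (v, w) \<in> T})" using assms(2) by blast
  moreover have "finite {w. (v, w) \<in> T}" for v
    using assms by (auto intro: finite_subset[of _ V])
  ultimately show ?thesis using assms(1) unfolding deg_def by (metis card_SigmaI)
qed

lemma two_le_deg:
  assumes "finite V" "T \<subseteq> V \<times> V" "(v, a) \<in> T" "(v, b) \<in> T" "a \<noteq> b"
  shows "2 \<le> deg T v"
proof -
  have "finite {w. (v, w) \<in> T}" using assms(1,2) by (auto intro: finite_subset[of _ V])
  then have "card {a, b} \<le> deg T v" unfolding deg_def using assms(3,4) by (intro card_mono) auto
  then show ?thesis using assms(5) by simp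
qed

text \<open>Both families of arcs have \<open>|V| - 1\<close> elements, and they are disjoint because the next
  hop is strictly closer to \<open>r\<close>.\<close>

lemma parent_arcs_eq:
  assumes "finite V" "T \<subseteq> V \<times> V" "sym T" "connected_on V T"
    and card_T: "card T = 2 * (card V - 1)" and "r \<in> V"
  shows "T = (\<lambda>v. (v, next_hop T v r)) ` (V - {r}) \<union> (\<lambda>v. (next_hop T v r, v)) ` (V - {r})"
    (is "T = ?A \<union> ?B")
proof -
  have p: "(v, next_hop T v r) \<in> T" "tdist T (next_hop T v r) r < tdist T v r"
    if "v \<in> V - {r}" for v
    using next_hop_edge[of T v r] tdist_next_hop[of T v r] that assms(4,6)
    unfolding connected_on_iff_reachable by auto
  have "card ?A = card V - 1" "card ?B = card V - 1"
    using assms(1,6) by (subst card_image; auto simp: inj_on_def)+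
  moreover have "?A \<inter> ?B = {}"
  proof -
    have False if "v \<in> V - {r}" "w \<in> V - {r}" "(v, next_hop T v r) = (next_hop T w r, w)" for v w
    proof -
      have "next_hop T w r = v" "next_hop T v r = w" using that(3) by (metis prod.inject)+
      then have "tdist T w r < tdist T v r" "tdist T v r < tdist T w r"
        using p(2)[OF that(1)] p(2)[OF that(2)] by (simp_all only:)
      then show False by simp
    qed
    then show ?thesis by auto
  qed
  moreover have "?A \<union> ?B \<subseteq> T"
    using p(1) symD[OF assms(3) p(1)] by blast
  moreover have "finite T" using assms(1,2) finite_subset by blast
  ultimately show ?thesis
    using card_T card_subset_eq[of T "?A \<union> ?B"] assms(1) by (simp add: card_Un_disjoint)
qed

lemma unique_neighbour_not_farther:
  assumes "finite V" "T \<subseteq> V \<times> V" "sym T" "connected_on V T"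
    and "card T = 2 * (card V - 1)" and "r \<in> V"
    and "(u, w) \<in> T" "tdist T w r \<le> tdist T u r"
    and "(u, w') \<in> T" "tdist T w' r \<le> tdist T u r"
  shows "w = w'"
proof -
  have parent: "w = next_hop T u r" if "(u, w) \<in> T" "tdist T w r \<le> tdist T u r" for u w
  proof -
    have "tdist T (next_hop T v r) r < tdist T v r" if "v \<in> V - {r}" for v
      using tdist_next_hop[of T v r] that assms(4,6) unfolding connected_on_iff_reachable by auto
    then have "(u, w) \<notin> (\<lambda>v. (next_hop T v r, v)) ` (V - {r})" using that(2) by fastforce
    then show ?thesis using that(1) parent_arcs_eq[OF assms(1-6)] by blast
  qed
  show ?thesis using parent assms(7-10) by blast
qed

lemma is_cycle_succ_edge:
  assumes "is_cycle T vs" "q < length vs"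
  shows "(vs ! q, vs ! (if Suc q = length vs then 0 else Suc q)) \<in> T"
proof (cases "Suc q = length vs")
  case True
  have "vs \<noteq> []" using assms(2) by auto
  moreover have "q = length vs - 1" using True by simp
  ultimately have "last vs = vs ! q" "hd vs = vs ! 0" by (simp_all add: last_conv_nth hd_conv_nth)
  then show ?thesis using assms(1) True by (simp add: is_cycle_def)
next
  case False
  then show ?thesis using assms walk_nth_edge[of T vs q] by (simp add: is_cycle_def)
qed

lemma is_cycle_two_neighbours:
  assumes "is_cycle T vs" "sym T" "c \<in> set vs"
  obtains a b where "a \<noteq> b" "a \<in> set vs" "b \<in> set vs" "(c, a) \<in> T" "(c, b) \<in> T"
proof -
  define m where "m = length vs"
  obtain q where q: "q < m" "c = vs ! q" using assms(3) unfolding m_def by (auto simp: in_set_conv_nth)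
  have "3 \<le> m" "distinct vs" using assms(1) unfolding is_cycle_def m_def by auto
  define s where "s = (if Suc q = m then 0 else Suc q)"
  define p where "p = (if q = 0 then m - 1 else q - 1)"
  have "s < m" "p < m" "s \<noteq> p" using q(1) \<open>3 \<le> m\<close> unfolding s_def p_def by auto
  then have "vs ! s \<noteq> vs ! p" using \<open>distinct vs\<close> unfolding m_def by (simp add: nth_eq_iff_index_eq)
  moreover have "(c, vs ! s) \<in> T"
    using is_cycle_succ_edge[OF assms(1)] q unfolding s_def m_def by simp
  moreover have "(vs ! p, c) \<in> T"
    using is_cycle_succ_edge[OF assms(1) \<open>p < m\<close>[unfolded m_def]] q \<open>3 \<le> m\<close>
    unfolding p_def m_def by (cases "q = 0") auto
  ultimately show ?thesis
    using that \<open>s < m\<close> \<open>p < m\<close> assms(2) unfolding m_def by (meson nth_mem symD)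
qed

text \<open>A cycle vertex farthest from a cycle vertex \<open>r\<close> would have two cycle neighbours that
  are not farther from \<open>r\<close>.\<close>

lemma acyclic_if_card_eq:
  assumes "finite V" "T \<subseteq> V \<times> V" "sym T" "connected_on V T"
    and "card T = 2 * (card V - 1)"
  shows "acyclic_graph T"
  unfolding acyclic_graph_def
proof
  assume "\<exists>vs. is_cycle T vs"
  then obtain vs where cyc: "is_cycle T vs" by blast
  define r where "r = hd vs"
  have "r \<in> V" using cyc assms(2) unfolding is_cycle_def r_def by auto
  define D where "D v = tdist T v r" for v
  have "vs \<noteq> []" using cyc unfolding is_cycle_def by auto
  then have "Max (D ` set vs) \<in> D ` set vs" by (intro Max_in) auto
  then obtain c where c: "c \<in> set vs" "D c = Max (D ` set vs)" by auto
  obtain a b where ab: "a \<noteq> b" "a \<in> set vs" "b \<in> set vs" "(c, a) \<in> T" "(c, b) \<in> T"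
    using is_cycle_two_neighbours[OF cyc assms(3) c(1)] .
  have "D a \<le> D c" "D b \<le> D c" using ab(2,3) c(2) by simp_all
  then have "a = b"
    using unique_neighbour_not_farther[OF assms \<open>r \<in> V\<close> ab(4) _ ab(5)] unfolding D_def by blast
  with ab(1) show False ..
qed

text \<open>The inner vertices of a shortest walk are distinct and have two distinct neighbours on it.\<close>

lemma tdist_le_card_branching:
  assumes "finite V" "T \<subseteq> V \<times> V" "sym T" "reachable T i j"
  shows "tdist T i j \<le> card {v \<in> V. 2 \<le> deg T v} + 1"
proof -
  define t where "t = tdist T i j"
  obtain vs where vs: "walk T vs" "hd vs = i" "last vs = j" "length vs = Suc t"
    using shortest_walk[OF assms(4)] unfolding t_def by blast
  have "distinct vs" using shortest_walk_distinct vs unfolding t_def by blast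
  have "(!) vs ` {1..<t} \<subseteq> {v \<in> V. 2 \<le> deg T v}"
  proof
    fix v assume "v \<in> (!) vs ` {1..<t}"
    then obtain q where q: "1 \<le> q" "q < t" "v = vs ! q" by auto
    have succ: "(v, vs ! Suc q) \<in> T" using walk_nth_edge[OF vs(1)] q vs(4) by simp
    have "(vs ! (q - 1), v) \<in> T" using walk_nth_edge[OF vs(1), of "q - 1"] q vs(4) by simp
    then have pred: "(v, vs ! (q - 1)) \<in> T" by (rule symD[OF assms(3)])
    have "vs ! Suc q \<noteq> vs ! (q - 1)"
      using \<open>distinct vs\<close> q vs(4) by (simp add: nth_eq_iff_index_eq)
    then have "2 \<le> deg T v" using two_le_deg[OF assms(1,2) succ pred] by blast
    moreover have "v \<in> V" using succ assms(2) by auto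
    ultimately show "v \<in> {v \<in> V. 2 \<le> deg T v}" by simp
  qed
  then have "card ((!) vs ` {1..<t}) \<le> card {v \<in> V. 2 \<le> deg T v}"
    using assms(1) by (intro card_mono) auto
  moreover have "card ((!) vs ` {1..<t}) = t - 1"
    using \<open>distinct vs\<close> vs(4) by (subst card_image) (auto simp: inj_on_def nth_eq_iff_index_eq)
  ultimately show ?thesis unfolding t_def by linarith
qed

section \<open>Feasible solutions of F1L from admissible trees\<close>

lemma admissible_tree_tdist_le:
  assumes "admissible_tree n E \<delta> T" "E \<subseteq> {1..n} \<times> {1..n}" "i \<in> {1..n}" "j \<in> {1..n}"
  shows "tdist T i j \<le> card {i \<in> {1..n}. \<delta> i > 1} + 1"
proof -
  have T: "T \<subseteq> {1..n} \<times> {1..n}" "sym T" "connected_on {1..n} T" "\<forall>i\<in>{1..n}. deg T i = \<delta> i"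
    using assms(1,2) unfolding admissible_tree_def spanning_tree_def by auto
  then have "{v \<in> {1..n}. 2 \<le> deg T v} = {i \<in> {1..n}. \<delta> i > 1}" by auto
  then show ?thesis
    using tdist_le_card_branching[OF finite_atLeastAtMost T(1,2)] T(3) assms(3,4)
    unfolding connected_on_iff_reachable by metis
qed

definition tree_x :: "(nat \<times> nat) set \<Rightarrow> nat \<Rightarrow> nat \<Rightarrow> int" where
  "tree_x T i j = of_bool ((i, j) \<in> T)"

definition tree_y :: "(nat \<times> nat) set \<Rightarrow> nat \<Rightarrow> nat \<Rightarrow> nat \<Rightarrow> int" where
  "tree_y T i k j = of_bool ((i, j) \<notin> T \<and> k = next_hop T i j)"

definition tree_d :: "(nat \<times> nat) set \<Rightarrow> nat \<Rightarrow> nat \<Rightarrow> int" where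
  "tree_d T i j = int (tdist T i j)"

lemma sum_tree_y:
  assumes "finite V" "connected_on V T" "T \<subseteq> E" "T \<subseteq> V \<times> V" "i \<in> V" "j \<in> V" "i \<noteq> j"
  shows "(\<Sum>k\<in>{k \<in> V. (i, k) \<in> E \<and> k \<noteq> j}. tree_y T i k j) = 1 - tree_x T i j"
proof (cases "(i, j) \<in> T")
  case True
  then show ?thesis by (simp add: tree_x_def tree_y_def)
next
  case False
  have "reachable T i j" using assms(2,5,6) unfolding connected_on_iff_reachable by blast
  then have "(i, next_hop T i j) \<in> T" using next_hop_edge assms(7) by blast
  then have "{k \<in> V. (i, k) \<in> E \<and> k \<noteq> j} \<inter> {k. k = next_hop T i j} = {next_hop T i j}"
    using False assms(3,4) by auto
  then show ?thesis using False assms(1) by (simp add: tree_x_def tree_y_def)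
qed

lemma sum_tree_x:
  assumes "finite V" "T \<subseteq> E" "T \<subseteq> V \<times> V"
  shows "(\<Sum>j\<in>{j \<in> V. (i, j) \<in> E}. tree_x T i j) = int (deg T i)"
proof -
  have "{j \<in> V. (i, j) \<in> E} \<inter> {j. (i, j) \<in> T} = {j. (i, j) \<in> T}" using assms(2,3) by auto
  then show ?thesis using assms(1) by (simp add: tree_x_def deg_def)
qed

lemma tree_y_le_tree_x: "reachable T i j \<Longrightarrow> i \<noteq> j \<Longrightarrow> tree_y T i k j \<le> tree_x T i k"
  using next_hop_edge[of T i j] by (simp add: tree_x_def tree_y_def)

lemma tree_d_tree_y:
  "reachable T i j \<Longrightarrow> i \<noteq> j \<Longrightarrow> tree_y T i k j = 1 \<Longrightarrow> tree_d T i j = tree_d T k j + 1"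
  using tdist_next_hop[of T i j] by (simp add: tree_d_def tree_y_def)

lemma F1L_feasible_tree:
  assumes E_V: "E \<subseteq> {1..n} \<times> {1..n}" and adm: "admissible_tree n E \<delta> T"
    and L_ge: "card {i \<in> {1..n}. \<delta> i > 1} + 1 \<le> L" and M_ge: "real L \<le> M"
  shows "F1L_feasible n E \<delta> L M (tree_x T) (tree_y T) (tree_d T)"
proof -
  have T: "T \<subseteq> E" "T \<subseteq> {1..n} \<times> {1..n}" "sym T" "connected_on {1..n} T"
    "\<And>i. i \<in> {1..n} \<Longrightarrow> deg T i = \<delta> i"
    using assms unfolding admissible_tree_def spanning_tree_def by auto
  have reach: "reachable T i j" if "i \<in> {1..n}" "j \<in> {1..n}" for i j
    using T(4) that unfolding connected_on_iff_reachable by blast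
  have d_le: "tree_d T i j \<le> int L" if "i \<in> {1..n}" "j \<in> {1..n}" for i j
    using admissible_tree_tdist_le[OF adm E_V that] L_ge unfolding tree_d_def by simp
  have d_pos: "1 \<le> tree_d T i j" if "i \<in> {1..n}" "j \<in> {1..n}" "i \<noteq> j" for i j
    using tdist_pos[OF reach[OF that(1,2)] that(3)] unfolding tree_d_def by simp
  have dist: "real_of_int (tree_d T i j)
      \<ge> real_of_int (tree_d T k j) + 1 - M * (1 - real_of_int (tree_y T i k j))"
    if "i \<in> {1..n}" "j \<in> {1..n}" "i < j \<and> (i, k) \<in> E \<and> k \<noteq> j" for i j k
  proof (cases "tree_y T i k j = 1")
    case True
    then show ?thesis using tree_d_tree_y[OF reach[OF that(1,2)]] that(3) by simp
  next
    case False
    have "k \<in> {1..n}" using that(3) E_V by auto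
    moreover have "tree_y T i k j = 0" using False by (simp add: tree_y_def)
    ultimately show ?thesis using d_le[of k j] d_pos[of i j] that M_ge by simp
  qed
  have hop_sum: "(\<Sum>k\<in>{k \<in> {1..n}. (i, k) \<in> E \<and> k \<noteq> j}. tree_y T i k j) = 1 - tree_x T i j"
    if "i \<in> {1..n}" "j \<in> {1..n}" "i < j" for i j
    using sum_tree_y[OF finite_atLeastAtMost T(4,1,2) that(1,2)] that(3) by simp
  show ?thesis
    unfolding F1L_feasible_def
  proof (intro conjI)
    show "\<forall>(i, j)\<in>E. tree_x T i j = tree_x T j i \<and> tree_x T i j \<in> {0, 1}"
      using T(3) by (auto simp: tree_x_def dest: symD)
    show "\<forall>i\<in>{1..n}. \<forall>j\<in>{1..n}. i \<noteq> j \<longrightarrow>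
        tree_d T i j = tree_d T j i \<and> 1 \<le> tree_d T i j \<and> tree_d T i j \<le> int L"
      using d_le d_pos tdist_sym[OF T(3)] by (simp add: tree_d_def)
    show "\<forall>(i, j)\<in>E. i < j \<longrightarrow>
        (\<Sum>k\<in>{k \<in> {1..n}. (i, k) \<in> E \<and> k \<noteq> j}. tree_y T i k j) = 1 - tree_x T i j"
      using hop_sum E_V by auto
    show "\<forall>i\<in>{1..n}. \<forall>j\<in>{1..n}. i < j \<and> (i, j) \<notin> E \<longrightarrow>
        (\<Sum>k\<in>{k \<in> {1..n}. (i, k) \<in> E \<and> k \<noteq> j}. tree_y T i k j) = 1"
      using hop_sum T(1) by (auto simp: tree_x_def)
    show "\<forall>i\<in>{1..n}. \<forall>j\<in>{1..n}. \<forall>k. i < j \<and> (i, k) \<in> E \<and> k \<noteq> j \<longrightarrow>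
        tree_y T i k j \<le> tree_x T i k"
      using tree_y_le_tree_x reach by blast
    show "\<forall>i\<in>{1..n}. (\<Sum>j\<in>{j \<in> {1..n}. (i, j) \<in> E}. tree_x T i j) = int (\<delta> i)"
      using sum_tree_x[OF finite_atLeastAtMost T(1,2)] T(5) by simp
  qed (use dist in \<open>auto simp: tree_y_def\<close>)
qed

lemma F1L_obj_tree_d: "F1L_obj n \<mu> (tree_d T) = comm_cost n \<mu> T"
  by (simp add: F1L_obj_def comm_cost_def tree_d_def)

section \<open>The tree selected by a feasible solution of F1L\<close>

lemma F1L_feasible_x:
  assumes "F1L_feasible n E \<delta> L M x y d" "(i, j) \<in> E"
  shows "x i j = x j i" "x i j \<in> {0, 1}"
proof -
  have "\<forall>(i, j)\<in>E. x i j = x j i \<and> x i j \<in> {0, 1}"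
    using assms(1) unfolding F1L_feasible_def by (elim conjE)
  then show "x i j = x j i" "x i j \<in> {0, 1}" using assms(2) by auto
qed

lemma F1L_feasible_d:
  assumes "F1L_feasible n E \<delta> L M x y d" "i \<in> {1..n}" "j \<in> {1..n}" "i \<noteq> j"
  shows "d i j = d j i" "1 \<le> d i j"
proof -
  have "\<forall>i\<in>{1..n}. \<forall>j\<in>{1..n}. i \<noteq> j \<longrightarrow> d i j = d j i \<and> 1 \<le> d i j \<and> d i j \<le> int L"
    using assms(1) unfolding F1L_feasible_def by (elim conjE)
  then show "d i j = d j i" "1 \<le> d i j" using assms(2-4) by auto
qed

lemma F1L_feasible_y:
  assumes "F1L_feasible n E \<delta> L M x y d" "i \<in> {1..n}" "j \<in> {1..n}" "i < j" "(i, k) \<in> E" "k \<noteq> j"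
  shows "y i k j \<in> {0, 1}" "y i k j \<le> x i k"
    and "real_of_int (d i j) \<ge> real_of_int (d k j) + 1 - M * (1 - real_of_int (y i k j))"
proof -
  have "\<forall>i\<in>{1..n}. \<forall>j\<in>{1..n}. \<forall>k. i < j \<and> (i, k) \<in> E \<and> k \<noteq> j \<longrightarrow> y i k j \<in> {0, 1}"
    using assms(1) unfolding F1L_feasible_def by (elim conjE)
  then show "y i k j \<in> {0, 1}" using assms(2-6) by blast
  have "\<forall>i\<in>{1..n}. \<forall>j\<in>{1..n}. \<forall>k. i < j \<and> (i, k) \<in> E \<and> k \<noteq> j \<longrightarrow> y i k j \<le> x i k"
    using assms(1) unfolding F1L_feasible_def by (elim conjE)
  then show "y i k j \<le> x i k" using assms(2-6) by blast
  have "\<forall>i\<in>{1..n}. \<forall>j\<in>{1..n}. \<forall>k. i < j \<and> (i, k) \<in> E \<and> k \<noteq> j \<longrightarrow>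
      real_of_int (d i j) \<ge> real_of_int (d k j) + 1 - M * (1 - real_of_int (y i k j))"
    using assms(1) unfolding F1L_feasible_def by (elim conjE)
  then show "real_of_int (d i j) \<ge> real_of_int (d k j) + 1 - M * (1 - real_of_int (y i k j))"
    using assms(2-6) by blast
qed

lemma F1L_feasible_y_sum:
  assumes "F1L_feasible n E \<delta> L M x y d" "i \<in> {1..n}" "j \<in> {1..n}" "i < j"
  shows "(\<Sum>k\<in>{k \<in> {1..n}. (i, k) \<in> E \<and> k \<noteq> j}. y i k j) = (if (i, j) \<in> E then 1 - x i j else 1)"
proof -
  have "\<forall>(i, j)\<in>E. i < j \<longrightarrow> (\<Sum>k\<in>{k \<in> {1..n}. (i, k) \<in> E \<and> k \<noteq> j}. y i k j) = 1 - x i j"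
    using assms(1) unfolding F1L_feasible_def by (elim conjE)
  moreover have "\<forall>i\<in>{1..n}. \<forall>j\<in>{1..n}. i < j \<and> (i, j) \<notin> E \<longrightarrow>
      (\<Sum>k\<in>{k \<in> {1..n}. (i, k) \<in> E \<and> k \<noteq> j}. y i k j) = 1"
    using assms(1) unfolding F1L_feasible_def by (elim conjE)
  ultimately show ?thesis using assms(2-4) by auto
qed

lemma F1L_feasible_x_sum:
  assumes "F1L_feasible n E \<delta> L M x y d" "i \<in> {1..n}"
  shows "(\<Sum>j\<in>{j \<in> {1..n}. (i, j) \<in> E}. x i j) = int (\<delta> i)"
proof -
  have "\<forall>i\<in>{1..n}. (\<Sum>j\<in>{j \<in> {1..n}. (i, j) \<in> E}. x i j) = int (\<delta> i)"
    using assms(1) unfolding F1L_feasible_def by (elim conjE)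
  then show ?thesis using assms(2) by blast
qed

lemma F1L_feasible_sym:
  assumes "F1L_feasible n E \<delta> L M x y d" "\<And>i j. (i, j) \<in> E \<Longrightarrow> (j, i) \<in> E"
  shows "sym {(i, j) \<in> E. x i j = 1}"
  using F1L_feasible_x(1)[OF assms(1)] assms(2) unfolding sym_def by fastforce

lemma F1L_feasible_next_hop:
  assumes feas: "F1L_feasible n E \<delta> L M x y d"
    and ij: "i \<in> {1..n}" "j \<in> {1..n}" "i < j" and not_edge: "(i, j) \<notin> {(i, j) \<in> E. x i j = 1}"
  obtains k where "k \<in> {1..n}" "k \<noteq> j" "(i, k) \<in> {(i, j) \<in> E. x i j = 1}" "d k j < d i j"
proof -
  let ?K = "{k \<in> {1..n}. (i, k) \<in> E \<and> k \<noteq> j}"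
  have "(i, j) \<in> E \<Longrightarrow> x i j = 0" using not_edge F1L_feasible_x(2)[OF feas] by auto
  then have "(\<Sum>k\<in>?K. y i k j) = 1" using F1L_feasible_y_sum[OF feas ij] by auto
  then obtain k where k: "k \<in> ?K" "y i k j \<noteq> 0"
    by (metis (no_types, lifting) sum.neutral zero_neq_one)
  then have ik: "(i, k) \<in> E" "k \<noteq> j" by auto
  note hop = F1L_feasible_y[OF feas ij ik]
  have y1: "y i k j = 1" using hop(1) k(2) by auto
  then have "x i k = 1" using hop(2) F1L_feasible_x(2)[OF feas ik(1)] by auto
  moreover have "real_of_int (d k j) + 1 \<le> real_of_int (d i j)" using hop(3) y1 by simp
  then have "d k j < d i j" by linarith
  ultimately show ?thesis using that k(1) ik by blast
qed

text \<open>The next-hop constraints only concern pairs \<open>i < j\<close>; the other pairs are reached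
  through the symmetry of \<open>d\<close> and of the selected edges, inside the same induction on \<open>d i j\<close>.\<close>

lemma F1L_feasible_reachable:
  assumes feas: "F1L_feasible n E \<delta> L M x y d"
    and E_sym: "\<And>i j. (i, j) \<in> E \<Longrightarrow> (j, i) \<in> E"
    and "i \<in> {1..n}" "j \<in> {1..n}" "i \<noteq> j"
  defines "T \<equiv> {(i, j) \<in> E. x i j = 1}"
  shows "reachable T i j \<and> tdist T i j \<le> nat (d i j)"
  using assms(3-5)
proof (induction "nat (d i j)" arbitrary: i j rule: less_induct)
  case less
  note d = F1L_feasible_d[OF feas]
  have ordered: "reachable T i' j' \<and> tdist T i' j' \<le> nat (d i' j')"
    if i'j': "i' \<in> {1..n}" "j' \<in> {1..n}" "i' < j'" "d i' j' = d i j" for i' j'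
  proof (cases "(i', j') \<in> T")
    case True
    have "reachable T i' j'" using reachable_Cons[OF True reachable_refl] .
    moreover have "tdist T i' j' \<le> 1" using tdist_Cons_le[OF True reachable_refl] by simp
    ultimately show ?thesis using d(2)[OF i'j'(1,2)] i'j'(3) by simp
  next
    case False
    then obtain k where k: "k \<in> {1..n}" "k \<noteq> j'" "(i', k) \<in> T" "d k j' < d i' j'"
      using F1L_feasible_next_hop[OF feas i'j'(1-3)] unfolding T_def by blast
    have d_k: "1 \<le> d k j'" using d(2)[OF k(1) i'j'(2) k(2)] .
    then have "nat (d k j') < nat (d i j)" using k(4) i'j'(4) by simp
    then have reach: "reachable T k j'" and "tdist T k j' \<le> nat (d k j')"
      using less.hyps k(1,2) i'j'(2) by blast+
    moreover have "Suc (nat (d k j')) \<le> nat (d i' j')" using d_k k(4) by simp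
    ultimately show ?thesis
      using reachable_Cons[OF k(3) reach] tdist_Cons_le[OF k(3) reach] by simp
  qed
  show ?case
  proof (cases "i < j")
    case True
    then show ?thesis using ordered less.prems by blast
  next
    case False
    have sym: "sym T" unfolding T_def using F1L_feasible_sym[OF feas E_sym] .
    have "d j i = d i j" using d(1) less.prems by simp
    then have "reachable T j i" "tdist T j i \<le> nat (d i j)"
      using ordered[of j i] less.prems False by auto
    then show ?thesis using reachable_sym[OF sym] tdist_sym[OF sym, of i j] by simp
  qed
qed

lemma F1L_feasible_deg:
  assumes feas: "F1L_feasible n E \<delta> L M x y d" and E_V: "E \<subseteq> {1..n} \<times> {1..n}"
    and "i \<in> {1..n}"
  shows "deg {(i, j) \<in> E. x i j = 1} i = \<delta> i"
proof -
  let ?J = "{j \<in> {1..n}. (i, j) \<in> E}"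
  have "x i j = of_bool (x i j = 1)" if "j \<in> ?J" for j
    using F1L_feasible_x(2)[OF feas] that by auto
  then have "(\<Sum>j\<in>?J. x i j) = (\<Sum>j\<in>?J. of_bool (x i j = 1))" by (rule sum.cong[OF refl])
  also have "\<dots> = int (card (?J \<inter> {j. x i j = 1}))" by simp
  also have "?J \<inter> {j. x i j = 1} = {j. (i, j) \<in> {(i, j) \<in> E. x i j = 1}}" using E_V by auto
  finally show ?thesis
    using F1L_feasible_x_sum[OF feas assms(3)] unfolding deg_def by simp
qed

lemma F1L_feasible_admissible:
  assumes feas: "F1L_feasible n E \<delta> L M x y d" and E_V: "E \<subseteq> {1..n} \<times> {1..n}"
    and E_sym: "\<And>i j. (i, j) \<in> E \<Longrightarrow> (j, i) \<in> E"
    and delta_sum: "(\<Sum>i\<in>{1..n}. \<delta> i) = 2 * (n - 1)"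
  defines "T \<equiv> {(i, j) \<in> E. x i j = 1}"
  shows "admissible_tree n E \<delta> T"
proof -
  have TE: "T \<subseteq> E" and TV: "T \<subseteq> {1..n} \<times> {1..n}" using E_V unfolding T_def by auto
  have sym: "sym T" unfolding T_def using F1L_feasible_sym[OF feas E_sym] .
  have conn: "connected_on {1..n} T"
    unfolding connected_on_iff_reachable
  proof (intro ballI)
    fix i j assume "i \<in> {1..n}" "j \<in> {1..n}"
    then show "reachable T i j"
      using F1L_feasible_reachable[OF feas E_sym, of i j] reachable_refl[of T i]
      unfolding T_def by (cases "i = j") auto
  qed
  have deg: "deg T i = \<delta> i" if "i \<in> {1..n}" for i
    using F1L_feasible_deg[OF feas E_V that] unfolding T_def .
  have "card T = 2 * (card {1..n} - 1)"
    using card_eq_sum_deg[OF finite_atLeastAtMost TV] deg delta_sum by simp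
  then have "acyclic_graph T" by (rule acyclic_if_card_eq[OF finite_atLeastAtMost TV sym conn])
  then show ?thesis
    unfolding admissible_tree_def spanning_tree_def using TE sym conn deg by blast
qed

lemma comm_cost_le_F1L_obj:
  assumes feas: "F1L_feasible n E \<delta> L M x y d"
    and E_sym: "\<And>i j. (i, j) \<in> E \<Longrightarrow> (j, i) \<in> E"
    and mu_nonneg: "\<And>i j. i \<in> {1..n} \<Longrightarrow> j \<in> {1..n} \<Longrightarrow> i \<noteq> j \<Longrightarrow> \<mu> i j \<ge> 0"
  shows "comm_cost n \<mu> {(i, j) \<in> E. x i j = 1} \<le> F1L_obj n \<mu> d"
  unfolding comm_cost_def F1L_obj_def
proof (intro sum_mono mult_left_mono)
  fix i j assume "i \<in> {1..n}" "j \<in> {1..n} - {i}"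
  then have ij: "i \<in> {1..n}" "j \<in> {1..n}" "i \<noteq> j" by auto
  then show "0 \<le> \<mu> i j" by (rule mu_nonneg)
  have "1 \<le> d i j" using F1L_feasible_d(2)[OF feas ij] .
  then show "real (tdist {(i, j) \<in> E. x i j = 1} i j) \<le> real_of_int (d i j)"
    using F1L_feasible_reachable[OF feas E_sym ij] by linarith
qed

theorem proposition3:
  fixes n :: nat and E :: "(nat \<times> nat) set" and \<mu> :: "nat \<Rightarrow> nat \<Rightarrow> real"
    and \<delta> :: "nat \<Rightarrow> nat" and M :: real
    and x :: "nat \<Rightarrow> nat \<Rightarrow> int" and y :: "nat \<Rightarrow> nat \<Rightarrow> nat \<Rightarrow> int" and d :: "nat \<Rightarrow> nat \<Rightarrow> int"
  assumes E_V: "E \<subseteq> {1..n} \<times> {1..n}"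
    and E_sym: "\<And>i j. (i, j) \<in> E \<Longrightarrow> (j, i) \<in> E"
    and E_noloop: "\<And>i. (i, i) \<notin> E"
    and mu_sym: "\<And>i j. i \<in> {1..n} \<Longrightarrow> j \<in> {1..n} \<Longrightarrow> i \<noteq> j \<Longrightarrow> \<mu> i j = \<mu> j i"
    and mu_nonneg: "\<And>i j. i \<in> {1..n} \<Longrightarrow> j \<in> {1..n} \<Longrightarrow> i \<noteq> j \<Longrightarrow> \<mu> i j \<ge> 0"
    and delta_pos: "\<And>i. i \<in> {1..n} \<Longrightarrow> \<delta> i \<ge> 1"
    and delta_sum: "(\<Sum>i\<in>{1..n}. \<delta> i) = 2 * (n - 1)"
    and admissible_exists: "\<exists>T. admissible_tree n E \<delta> T"
    and M_ge: "M \<ge> real (card {i\<in>{1..n}. \<delta> i > 1} + 2)"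
    and opt: "F1L_optimal n E \<mu> \<delta> (card {i\<in>{1..n}. \<delta> i > 1} + 2) M x y d"
  shows "optimal_tree n E \<mu> \<delta> {(i, j) \<in> E. x i j = 1}
         \<and> F1L_obj n \<mu> d = comm_cost n \<mu> {(i, j) \<in> E. x i j = 1}"
proof -
  define T where "T = {(i, j) \<in> E. x i j = 1}"
  have feas: "F1L_feasible n E \<delta> (card {i\<in>{1..n}. \<delta> i > 1} + 2) M x y d"
    using opt unfolding F1L_optimal_def by blast
  have adm: "admissible_tree n E \<delta> T"
    unfolding T_def by (rule F1L_feasible_admissible[OF feas E_V E_sym delta_sum])
  have lower: "comm_cost n \<mu> T \<le> F1L_obj n \<mu> d"
    unfolding T_def by (rule comm_cost_le_F1L_obj[OF feas E_sym mu_nonneg])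
  have upper: "F1L_obj n \<mu> d \<le> comm_cost n \<mu> T'" if "admissible_tree n E \<delta> T'" for T'
  proof -
    have "F1L_feasible n E \<delta> (card {i\<in>{1..n}. \<delta> i > 1} + 2) M (tree_x T') (tree_y T') (tree_d T')"
      using F1L_feasible_tree[OF E_V that _ M_ge] by simp
    then have "F1L_obj n \<mu> d \<le> F1L_obj n \<mu> (tree_d T')"
      using opt unfolding F1L_optimal_def by blast
    then show ?thesis by (simp add: F1L_obj_tree_d)
  qed
  have "optimal_tree n E \<mu> \<delta> T"
    unfolding optimal_tree_def using adm lower upper by (blast intro: order_trans)
  moreover have "F1L_obj n \<mu> d = comm_cost n \<mu> T" using lower upper[OF adm] by simp
  ultimately show ?thesis unfolding T_def by simp
qed

end
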